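(* Let $d=1$. There is a constant $c_1$ depending only on the dimension such that for all $N\ge1$, $n\ge1$ and integers $0=i_0<i_1<\cdots<i_n\le N$, $$\sum_{x_1,\dots,x_n\in\mathbb{Z}}\ \prod_{k=1}^n p_0^2(i_k-i_{k-1},x_k-x_{k-1})\left(\sum_{x\in\mathbb{Z}}x^2p_0(N-i_n,x-x_n)\right)^2\le c_1^nN^2\prod_{k=1}^n(i_k-i_{k-1})^{-1/2},$$ where $x_0=0$.
   Context: $p_0(n,x)$ is the probability that simple random walk on $\mathbb{Z}$ started at $0$ is at $x$ at time $n$. *)

theory Defs
  imports "HOL-Analysis.Analysis"
begin

fun srw_p :: "nat \<Rightarrow> int \<Rightarrow> real" where
  "srw_p 0 x = (if x = 0 then 1 else 0)"
| "srw_p (Suc n) x = (srw_p n (x - 1) + srw_p n (x + 1)) / 2"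

end

theory Submission
  imports Defs
begin

(*
  The central binomial coefficient satisfies binom(2m, m) / 4^m \<le> (2m + 1)^(-1/2), whence
  p_t(x) \<le> t^(-1/2). This turns each squared kernel p_t(y - a)^2 into t^(-1/2) times the kernel
  itself, so summing out the last position becomes an expectation. The second and fourth moments
  of the walk give E_a[(Y^2 + 3s)^2] \<le> (a^2 + 3(s + t))^2: the slack 3s is stable under one more
  step of length t. The inner sum of the theorem equals x_n^2 + (N - i_n), so integrating out
  x_n, ..., x_1 in turn yields (3N)^2 times the product of the t^(-1/2); hence c_1 = 9.
*)

lemma infsum_le_of_finite_sums_le:
  fixes f :: "'a \<Rightarrow> real"
  assumes "\<And>F. finite F \<Longrightarrow> F \<subseteq> A \<Longrightarrow> sum f F \<le> b"
  shows "infsum f A \<le> b"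
proof (cases "f summable_on A")
  case True
  then show ?thesis using assms by (rule infsum_le_finite_sums)
next
  case False
  then show ?thesis using assms[of "{}"] by (simp add: infsum_not_exists)
qed

lemma srw_p_nonneg: "0 \<le> srw_p n x"
  by (induction n arbitrary: x) auto

lemma srw_p_eq_0_if_abs_gt: "int n < \<bar>x\<bar> \<Longrightarrow> srw_p n x = 0"
  by (induction n arbitrary: x) auto

lemma srw_p_eq_0_if_odd: "odd (x + int n) \<Longrightarrow> srw_p n x = 0"
  by (induction n arbitrary: x) auto

lemma srw_p_binomial: "srw_p n (2 * int k - int n) = real (n choose k) / 2 ^ n"
proof (induction n arbitrary: k)
  case 0
  then show ?case by (cases k) auto
next
  case (Suc n)
  show ?case
  proof (cases k)
    case 0
    have "srw_p n (- int n - 2) = 0" by (rule srw_p_eq_0_if_abs_gt) simp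
    with 0 Suc.IH[of 0] show ?thesis by (simp add: algebra_simps)
  next
    case (Suc j)
    have "srw_p (Suc n) (2 * int k - int (Suc n))
        = (srw_p n (2 * int j - int n) + srw_p n (2 * int (Suc j) - int n)) / 2"
      using Suc by (simp add: algebra_simps)
    also have "\<dots> = real (Suc n choose k) / 2 ^ Suc n"
      using Suc Suc.IH[of j] Suc.IH[of "Suc j"] by (simp add: add_divide_distrib)
    finally show ?thesis .
  qed
qed

lemma srw_p_even_le_central: "srw_p (2 * m) x \<le> real ((2 * m) choose m) / 4 ^ m"
proof (cases "\<bar>x\<bar> \<le> int (2 * m) \<and> even (x + int (2 * m))")
  case True
  then obtain j where j: "x = 2 * j"
    by (auto elim: evenE)
  define k where "k = nat (j + int m)"
  have x: "x = 2 * int k - int (2 * m)"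
    using True unfolding j k_def by simp
  have "srw_p (2 * m) x = real ((2 * m) choose k) / 4 ^ m"
    unfolding x srw_p_binomial by (simp add: power_mult)
  also have "\<dots> \<le> real ((2 * m) choose m) / 4 ^ m"
    by (intro divide_right_mono) (simp_all add: binomial_maximum')
  finally show ?thesis .
qed (auto simp: srw_p_eq_0_if_abs_gt srw_p_eq_0_if_odd)

lemma central_binomial_Suc:
  "real ((2 * Suc m) choose Suc m) = 2 * (2 * real m + 1) / (real m + 1) * real ((2 * m) choose m)"
proof -
  have "real ((2 * Suc m) choose Suc m) = fact (Suc (Suc (2 * m))) / (fact (Suc m) * fact (Suc m))"
    using binomial_fact[of "Suc m" "2 * Suc m"] by simp
  also have "\<dots> = 2 * (2 * real m + 1) / (real m + 1) * (fact (2 * m) / (fact m * fact m))"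
    unfolding fact_Suc by (simp add: divide_simps del: of_nat_Suc) (simp add: algebra_simps)
  also have "fact (2 * m) / (fact m * fact m) = real ((2 * m) choose m)"
    using binomial_fact[of m "2 * m", where 'a=real] by simp
  finally show ?thesis .
qed

lemma central_binomial_sq_le: "(real ((2 * m) choose m) / 4 ^ m)^2 * (2 * real m + 1) \<le> 1"
proof -
  define c where "c k = real ((2 * k) choose k) / 4 ^ k" for k
  have c_Suc: "c (Suc k) = c k * (2 * real k + 1) / (2 * (real k + 1))" for k
    unfolding c_def central_binomial_Suc
    by (simp add: divide_simps del: of_nat_Suc) (simp add: algebra_simps)
  have "(c m)^2 * (2 * real m + 1) \<le> 1"
  proof (induction m)
    case (Suc m)
    have "(c (Suc m))^2 * (2 * real (Suc m) + 1)
        = ((c m)^2 * (2 * real m + 1)) * ((2 * real m + 1) * (2 * real m + 3) / (4 * (real m + 1)^2))"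
      unfolding c_Suc by (simp add: field_simps power2_eq_square)
    also have "\<dots> \<le> 1 * 1"
    proof (rule mult_mono)
      show "(2 * real m + 1) * (2 * real m + 3) / (4 * (real m + 1)^2) \<le> 1"
        by (subst pos_divide_le_eq) (auto simp: power2_eq_square algebra_simps add_pos_nonneg)
    qed (use Suc.IH in auto)
    finally show ?case by simp
  qed (simp add: c_def)
  then show ?thesis unfolding c_def .
qed

lemma srw_p_le_inverse_sqrt:
  assumes "1 \<le> t"
  shows "srw_p t x \<le> real t powr (-1/2)"
proof -
  define m where "m = t div 2"
  define a where "a = real ((2 * m) choose m) / 4 ^ m"
  have central: "srw_p (2 * m) y \<le> a" for y
    unfolding a_def by (rule srw_p_even_le_central)
  have le_a: "srw_p t x \<le> a"
  proof (cases "even t")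
    case True
    then have "t = 2 * m" unfolding m_def by simp
    then show ?thesis using central by simp
  next
    case False
    then have "srw_p t x = (srw_p (2 * m) (x - 1) + srw_p (2 * m) (x + 1)) / 2"
      unfolding m_def by (metis odd_two_times_div_two_succ srw_p.simps(2) Suc_eq_plus1)
    also have "\<dots> \<le> a"
      using central[of "x - 1"] central[of "x + 1"] by (simp add: field_simps)
    finally show ?thesis .
  qed
  have "a^2 * real t \<le> 1"
  proof -
    have "a^2 * real t \<le> a^2 * (2 * real m + 1)"
      unfolding m_def by (intro mult_left_mono) auto
    then show ?thesis using central_binomial_sq_le[of m] unfolding a_def[symmetric] by linarith
  qed
  then have "a \<le> sqrt (1 / real t)"
    using assms by (intro real_le_rsqrt) (simp add: field_simps)
  also have "sqrt (1 / real t) = real t powr (-1/2)"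
    using assms by (simp add: powr_minus_divide powr_half_sqrt real_sqrt_divide)
  finally show ?thesis
    using le_a by linarith
qed

lemma summable_on_srw_p: "(\<lambda>y. g y * srw_p n (y - a)) summable_on UNIV"
proof -
  have "(\<lambda>y. g y * srw_p n (y - a)) summable_on {a - int n .. a + int n}"
    by simp
  then show ?thesis
    by (rule summable_on_cong_neutral[THEN iffD1, rotated -1]) (auto intro!: srw_p_eq_0_if_abs_gt)
qed

lemma infsum_srw_p_0: "(\<Sum>\<^sub>\<infinity>y. g y * srw_p 0 (y - a)) = g a"
proof -
  have "(\<Sum>\<^sub>\<infinity>y. g y * srw_p 0 (y - a)) = (\<Sum>\<^sub>\<infinity>y\<in>{a}. g y * srw_p 0 (y - a))"
    by (rule infsum_cong_neutral) auto
  then show ?thesis by simp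
qed

lemma infsum_srw_p_Suc:
  "(\<Sum>\<^sub>\<infinity>y. g y * srw_p (Suc n) (y - a))
     = ((\<Sum>\<^sub>\<infinity>y. g y * srw_p n (y - (a + 1))) + (\<Sum>\<^sub>\<infinity>y. g y * srw_p n (y - (a - 1)))) / 2"
proof -
  have eq: "(\<lambda>y. g y * srw_p (Suc n) (y - a))
      = (\<lambda>y. (g y * srw_p n (y - (a + 1)) + g y * srw_p n (y - (a - 1))) * (1 / 2))"
    by (simp add: fun_eq_iff algebra_simps)
  show ?thesis
    unfolding eq infsum_cmult_left' by (simp add: infsum_add summable_on_srw_p)
qed

lemma infsum_srw_p: "(\<Sum>\<^sub>\<infinity>y. srw_p n (y - a)) = 1"
proof (induction n arbitrary: a)
  case 0
  show ?case using infsum_srw_p_0[of "\<lambda>_. 1"] by (simp only: mult_1)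
next
  case (Suc n)
  show ?case using infsum_srw_p_Suc[of "\<lambda>_. 1"] by (simp only: mult_1 Suc) simp
qed

lemma infsum_srw_p_second_moment:
  "(\<Sum>\<^sub>\<infinity>y. (real_of_int y)^2 * srw_p n (y - a)) = (real_of_int a)^2 + real n"
proof (induction n arbitrary: a)
  case 0
  show ?case using infsum_srw_p_0[of "\<lambda>y. (real_of_int y)^2"] by simp
next
  case (Suc n)
  show ?case unfolding infsum_srw_p_Suc Suc by (simp add: algebra_simps power2_eq_square)
qed

lemma infsum_srw_p_fourth_moment:
  "(\<Sum>\<^sub>\<infinity>y. (real_of_int y)^4 * srw_p n (y - a))
     = (real_of_int a)^4 + 6 * (real_of_int a)^2 * real n + 3 * (real n)^2 - 2 * real n"
proof (induction n arbitrary: a)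
  case 0
  show ?case using infsum_srw_p_0[of "\<lambda>y. (real_of_int y)^4"] by simp
next
  case (Suc n)
  show ?case
    unfolding infsum_srw_p_Suc Suc by (simp add: algebra_simps power2_eq_square power4_eq_xxxx)
qed

lemma infsum_sq_plus_const_sq_srw_p_le:
  assumes "0 \<le> s"
  shows "(\<Sum>\<^sub>\<infinity>y. ((real_of_int y)^2 + 3 * s)^2 * srw_p t (y - a))
     \<le> ((real_of_int a)^2 + 3 * (s + real t))^2"
proof -
  have "(\<lambda>y. ((real_of_int y)^2 + 3 * s)^2 * srw_p t (y - a))
      = (\<lambda>y. (real_of_int y)^4 * srw_p t (y - a)
           + (6 * s * ((real_of_int y)^2 * srw_p t (y - a)) + 9 * s^2 * srw_p t (y - a)))"
    by (simp add: fun_eq_iff algebra_simps power2_eq_square power4_eq_xxxx)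
  then have "(\<Sum>\<^sub>\<infinity>y. ((real_of_int y)^2 + 3 * s)^2 * srw_p t (y - a))
      = (real_of_int a)^4 + 6 * (real_of_int a)^2 * real t + 3 * (real t)^2 - 2 * real t
        + (6 * s * ((real_of_int a)^2 + real t) + 9 * s^2)"
    using summable_on_srw_p[of "\<lambda>_. 1"]
    by (simp add: infsum_add summable_on_add summable_on_cmult_right summable_on_srw_p
        infsum_cmult_right' infsum_srw_p infsum_srw_p_second_moment infsum_srw_p_fourth_moment)
  also have "\<dots> \<le> ((real_of_int a)^2 + 3 * (s + real t))^2"
    using assms by (simp add: algebra_simps power2_eq_square power4_eq_xxxx)
  finally show ?thesis .
qed

lemma sum_srw_p_squared_le:
  assumes "1 \<le> t" "0 \<le> s" "finite A"
  shows "(\<Sum>y\<in>A. (srw_p t (y - a))^2 * ((real_of_int y)^2 + 3 * s)^2)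
     \<le> real t powr (-1/2) * ((real_of_int a)^2 + 3 * (s + real t))^2"
proof -
  define h where "h y = ((real_of_int y)^2 + 3 * s)^2 * srw_p t (y - a)" for y
  have "sum h A = (\<Sum>\<^sub>\<infinity>y\<in>A. h y)"
    using assms(3) by simp
  also have "\<dots> \<le> (\<Sum>\<^sub>\<infinity>y. h y)"
    by (rule infsum_mono_neutral) (auto simp: h_def assms(3) summable_on_srw_p srw_p_nonneg)
  also have "\<dots> \<le> ((real_of_int a)^2 + 3 * (s + real t))^2"
    unfolding h_def by (rule infsum_sq_plus_const_sq_srw_p_le[OF assms(2)])
  finally have sum_h: "sum h A \<le> ((real_of_int a)^2 + 3 * (s + real t))^2" .
  have "(srw_p t (y - a))^2 * ((real_of_int y)^2 + 3 * s)^2 \<le> real t powr (-1/2) * h y" for y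
  proof -
    have "(srw_p t (y - a))^2 \<le> real t powr (-1/2) * srw_p t (y - a)"
      unfolding power2_eq_square
      by (intro mult_right_mono srw_p_le_inverse_sqrt srw_p_nonneg assms(1))
    from mult_right_mono[OF this, of "((real_of_int y)^2 + 3 * s)^2"]
    show ?thesis by (simp add: h_def mult_ac)
  qed
  then have "(\<Sum>y\<in>A. (srw_p t (y - a))^2 * ((real_of_int y)^2 + 3 * s)^2)
      \<le> real t powr (-1/2) * sum h A"
    by (simp add: sum_mono sum_distrib_left)
  also have "\<dots> \<le> real t powr (-1/2) * ((real_of_int a)^2 + 3 * (s + real t))^2"
    using sum_h by (simp add: mult_left_mono)
  finally show ?thesis .
qed

definition bounded_paths :: "nat \<Rightarrow> int \<Rightarrow> (nat \<Rightarrow> int) set" where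
  "bounded_paths n R = {x. \<forall>k. (k \<in> {1..n} \<longrightarrow> x k \<in> {-R..R}) \<and> (k \<notin> {1..n} \<longrightarrow> x k = 0)}"

lemma finite_bounded_paths: "finite (bounded_paths n R)"
  unfolding bounded_paths_def by (rule finite_set_of_finite_funs) auto

lemma bounded_paths_0: "bounded_paths 0 R = {\<lambda>_. 0}"
  by (auto simp: bounded_paths_def)

lemma bij_betw_bounded_paths_Suc:
  "bij_betw (\<lambda>(x, y). x(Suc n := y)) (bounded_paths n R \<times> {-R..R}) (bounded_paths (Suc n) R)"
proof (rule bij_betw_byWitness[where f' = "\<lambda>z. (z(Suc n := 0), z (Suc n))"])
  show "\<forall>p\<in>bounded_paths n R \<times> {-R..R}. (\<lambda>z. (z(Suc n := 0), z (Suc n))) ((\<lambda>(x, y). x(Suc n := y)) p) = p"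
    by (auto simp: bounded_paths_def fun_eq_iff)
  show "\<forall>z\<in>bounded_paths (Suc n) R. (\<lambda>(x, y). x(Suc n := y)) (z(Suc n := 0), z (Suc n)) = z"
    by auto
  show "(\<lambda>(x, y). x(Suc n := y)) ` (bounded_paths n R \<times> {-R..R}) \<subseteq> bounded_paths (Suc n) R"
    by (auto simp: bounded_paths_def)
  show "(\<lambda>z. (z(Suc n := 0), z (Suc n))) ` bounded_paths (Suc n) R \<subseteq> bounded_paths n R \<times> {-R..R}"
    by (auto simp: bounded_paths_def)
qed

lemma sum_bounded_paths_Suc:
  "sum g (bounded_paths (Suc n) R) = (\<Sum>x\<in>bounded_paths n R. \<Sum>y\<in>{-R..R}. g (x(Suc n := y)))"
  by (simp add: sum.cartesian_product sum.reindex_bij_betw[OF bij_betw_bounded_paths_Suc, symmetric]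
      case_prod_beta)

lemma finite_subset_bounded_paths:
  assumes "finite F" "\<And>x k. x \<in> F \<Longrightarrow> k \<notin> {1..n} \<Longrightarrow> x k = 0"
  obtains R where "F \<subseteq> bounded_paths n R"
proof
  define R where "R = Max (insert 0 ((\<lambda>(x, k). \<bar>x k\<bar>) ` (F \<times> {1..n})))"
  have "\<bar>x k\<bar> \<le> R" if "x \<in> F" "k \<in> {1..n}" for x k
    unfolding R_def using assms(1) that by (intro Max_ge) force+
  then show "F \<subseteq> bounded_paths n R"
    using assms(2) by (force simp: bounded_paths_def abs_le_iff)
qed

definition path_weight :: "(nat \<Rightarrow> nat) \<Rightarrow> nat \<Rightarrow> (nat \<Rightarrow> int) \<Rightarrow> real" where
  "path_weight i n x = (\<Prod>k\<in>{1..n}. (srw_p (i k - i (k - 1)) (x k - x (k - 1)))^2)"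

lemma path_weight_nonneg: "0 \<le> path_weight i n x"
  unfolding path_weight_def by (intro prod_nonneg) auto

lemma path_weight_Suc_upd:
  "path_weight i (Suc n) (x(Suc n := y)) = path_weight i n x * (srw_p (i (Suc n) - i n) (y - x n))^2"
proof -
  have "(\<Prod>k\<in>{1..n}. (srw_p (i k - i (k - 1)) ((x(Suc n := y)) k - (x(Suc n := y)) (k - 1)))^2)
      = path_weight i n x"
    unfolding path_weight_def by (rule prod.cong) auto
  then show ?thesis by (simp add: path_weight_def)
qed

lemma sum_path_weight_bounded_paths_le:
  fixes i :: "nat \<Rightarrow> nat"
  assumes "\<forall>k<n. i k < i (Suc k)" "0 \<le> s"
  shows "(\<Sum>x\<in>bounded_paths n R. path_weight i n x * ((real_of_int (x n))^2 + 3 * s)^2)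
    \<le> (\<Prod>k\<in>{1..n}. real (i k - i (k - 1)) powr (-1/2)) * (3 * (s + real (i n) - real (i 0)))^2"
  using assms
proof (induction n arbitrary: s)
  case 0
  then show ?case by (simp add: bounded_paths_0 path_weight_def power2_eq_square)
next
  case (Suc n)
  define t where "t = i (Suc n) - i n"
  have "i n < i (Suc n)" using Suc.prems by simp
  then have "1 \<le> t" and t: "real (i (Suc n)) = real (i n) + real t"
    unfolding t_def by auto
  have "(\<Sum>x\<in>bounded_paths (Suc n) R. path_weight i (Suc n) x * ((real_of_int (x (Suc n)))^2 + 3 * s)^2)
      = (\<Sum>x\<in>bounded_paths n R. path_weight i n x
           * (\<Sum>y\<in>{-R..R}. (srw_p t (y - x n))^2 * ((real_of_int y)^2 + 3 * s)^2))"
    by (simp add: sum_bounded_paths_Suc path_weight_Suc_upd t_def sum_distrib_left mult_ac)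
  also have "\<dots> \<le> (\<Sum>x\<in>bounded_paths n R. path_weight i n x
           * (real t powr (-1/2) * ((real_of_int (x n))^2 + 3 * (s + real t))^2))"
    by (intro sum_mono mult_left_mono sum_srw_p_squared_le \<open>1 \<le> t\<close> path_weight_nonneg)
      (use Suc.prems in auto)
  also have "\<dots> = real t powr (-1/2)
      * (\<Sum>x\<in>bounded_paths n R. path_weight i n x * ((real_of_int (x n))^2 + 3 * (s + real t))^2)"
    by (simp add: sum_distrib_left mult_ac)
  also have "\<dots> \<le> real t powr (-1/2) * ((\<Prod>k\<in>{1..n}. real (i k - i (k - 1)) powr (-1/2))
      * (3 * (s + real t + real (i n) - real (i 0)))^2)"
    by (intro mult_left_mono Suc.IH) (use Suc.prems in auto)
  also have "\<dots> = (\<Prod>k\<in>{1..Suc n}. real (i k - i (k - 1)) powr (-1/2))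
      * (3 * (s + real (i (Suc n)) - real (i 0)))^2"
    by (simp add: t t_def mult_ac add_ac)
  finally show ?case .
qed

lemma sum_path_weight_le:
  fixes i :: "nat \<Rightarrow> nat"
  assumes "\<forall>k<n. i k < i (Suc k)" "0 \<le> s"
    and "finite F" "\<And>x k. x \<in> F \<Longrightarrow> k \<notin> {1..n} \<Longrightarrow> x k = 0"
  shows "(\<Sum>x\<in>F. path_weight i n x * ((real_of_int (x n))^2 + 3 * s)^2)
    \<le> (\<Prod>k\<in>{1..n}. real (i k - i (k - 1)) powr (-1/2)) * (3 * (s + real (i n) - real (i 0)))^2"
proof -
  obtain R where "F \<subseteq> bounded_paths n R"
    using assms(3,4) by (rule finite_subset_bounded_paths)
  then have "(\<Sum>x\<in>F. path_weight i n x * ((real_of_int (x n))^2 + 3 * s)^2)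
      \<le> (\<Sum>x\<in>bounded_paths n R. path_weight i n x * ((real_of_int (x n))^2 + 3 * s)^2)"
    by (intro sum_mono2 finite_bounded_paths mult_nonneg_nonneg path_weight_nonneg) auto
  also have "\<dots> \<le> (\<Prod>k\<in>{1..n}. real (i k - i (k - 1)) powr (-1/2)) * (3 * (s + real (i n) - real (i 0)))^2"
    by (rule sum_path_weight_bounded_paths_le[OF assms(1,2)])
  finally show ?thesis .
qed

lemma infsum_path_weight_le:
  fixes i :: "nat \<Rightarrow> nat"
  assumes "n \<ge> 1" "i 0 = 0" and inc: "\<forall>k<n. i k < i (Suc k)" and "i n \<le> N"
  shows "(\<Sum>\<^sub>\<infinity>x\<in>{x. \<forall>k. k \<notin> {1..n} \<longrightarrow> x k = 0}.
      path_weight i n x * (\<Sum>\<^sub>\<infinity>y. (real_of_int y)^2 * srw_p (N - i n) (y - x n))^2)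
    \<le> 9 ^ n * (real N)^2 * (\<Prod>k\<in>{1..n}. real (i k - i (k - 1)) powr (-1/2))"
proof -
  define Q where "Q = (\<Prod>k\<in>{1..n}. real (i k - i (k - 1)) powr (-1/2))"
  define m where "m = real (N - i n)"
  have "0 \<le> m" and N: "m + real (i n) - real (i 0) = real N"
    using \<open>i 0 = 0\<close> \<open>i n \<le> N\<close> by (auto simp: m_def)
  have inner: "(\<Sum>\<^sub>\<infinity>y. (real_of_int y)^2 * srw_p (N - i n) (y - x n))^2
      \<le> ((real_of_int (x n))^2 + 3 * m)^2" for x :: "nat \<Rightarrow> int"
    unfolding infsum_srw_p_second_moment m_def by (intro power_mono) auto
  have "(\<Sum>\<^sub>\<infinity>x\<in>{x. \<forall>k. k \<notin> {1..n} \<longrightarrow> x k = 0}.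
      path_weight i n x * (\<Sum>\<^sub>\<infinity>y. (real_of_int y)^2 * srw_p (N - i n) (y - x n))^2)
      \<le> Q * (3 * real N)^2"
  proof (rule infsum_le_of_finite_sums_le)
    fix F assume F: "finite F" "F \<subseteq> {x :: nat \<Rightarrow> int. \<forall>k. k \<notin> {1..n} \<longrightarrow> x k = 0}"
    have "(\<Sum>x\<in>F. path_weight i n x * (\<Sum>\<^sub>\<infinity>y. (real_of_int y)^2 * srw_p (N - i n) (y - x n))^2)
        \<le> (\<Sum>x\<in>F. path_weight i n x * ((real_of_int (x n))^2 + 3 * m)^2)"
      by (intro sum_mono mult_left_mono inner path_weight_nonneg)
    also have "\<dots> \<le> Q * (3 * real N)^2"
      using sum_path_weight_le[OF inc \<open>0 \<le> m\<close>, of F] F unfolding Q_def N by auto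
    finally show "(\<Sum>x\<in>F. path_weight i n x * (\<Sum>\<^sub>\<infinity>y. (real_of_int y)^2 * srw_p (N - i n) (y - x n))^2)
        \<le> Q * (3 * real N)^2" .
  qed
  also have "\<dots> \<le> 9 ^ n * (real N)^2 * Q"
  proof -
    have "(9::real) \<le> 9 ^ n"
      using \<open>n \<ge> 1\<close> by (metis power_one_right power_increasing one_le_numeral)
    moreover have "0 \<le> (real N)^2 * Q"
      unfolding Q_def by (simp add: prod_nonneg)
    ultimately have "9 * ((real N)^2 * Q) \<le> 9 ^ n * ((real N)^2 * Q)"
      by (rule mult_right_mono)
    then show ?thesis
      by (simp add: power_mult_distrib mult_ac)
  qed
  finally show ?thesis
    unfolding Q_def .
qed

theorem lemma10:
  "\<exists>c1::real. \<forall>(N::nat) (n::nat) (i::nat \<Rightarrow> nat).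
     N \<ge> 1 \<longrightarrow> n \<ge> 1 \<longrightarrow> i 0 = 0 \<longrightarrow> (\<forall>k<n. i k < i (Suc k)) \<longrightarrow> i n \<le> N \<longrightarrow>
     (\<Sum>\<^sub>\<infinity>x\<in>{x::nat \<Rightarrow> int. \<forall>k. k \<notin> {1..n} \<longrightarrow> x k = 0}.
        (\<Prod>k\<in>{1..n}. (srw_p (i k - i (k - 1)) (x k - x (k - 1)))^2) *
        (\<Sum>\<^sub>\<infinity>y\<in>(UNIV::int set). (real_of_int y)^2 * srw_p (N - i n) (y - x n))^2)
     \<le> c1 ^ n * (real N)^2 * (\<Prod>k\<in>{1..n}. real (i k - i (k - 1)) powr (-1/2))"
  using infsum_path_weight_le unfolding path_weight_def by blast

end
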